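(* Let $C_\alpha>0$ and consider one of the following three setups for learning rates $\{\alpha_t\}_{t\ge0}$ and interval lengths $\{T_m\}_{m\ge0}$: (a) $\alpha_t=\frac{C_\alpha}{t+3}$ and $T_m=\frac{C_\alpha\ln^{\nu_1}(m+3)}{m+3}$ with $\nu_1\in(0,1)$; (b) $\alpha_t=\frac{C_\alpha}{(t+3)^\nu}$ with $\nu\in(\frac23,1)$ and $T_m=\frac{C_\alpha}{(m+3)^{\nu_2}}$ with $\frac12<\nu_2<\frac{\nu}{2-\nu}$; (c) $\alpha_t=\frac{C_\alpha}{(t+3)\ln^\nu(t+3)}$ with $\nu\in(0,1)$ and $T_m=\frac{C_\alpha}{m+3}$. Define $t_0=0$ and $t_{m+1}=\min\{k:\sum_{t=t_m}^{k-1}\alpha_t\ge T_m\}$ for $m\ge0$. Then there exist a constant $C$ and an integer $m_0$ such that for all $m\ge m_0$ and all $t\ge t_m$, $\alpha_t\le C\,T_m^2$. *)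

theory Defs
  imports Complex_Main
begin

fun tseq :: "(nat \<Rightarrow> real) \<Rightarrow> (nat \<Rightarrow> real) \<Rightarrow> nat \<Rightarrow> nat" where
  "tseq alpha T 0 = 0"
| "tseq alpha T (Suc m) = (LEAST k. (\<Sum>t = tseq alpha T m..<k. alpha t) \<ge> T m)"

end

theory Submission
  imports Defs "HOL-Real_Asymp.Real_Asymp"
begin

text \<open>
  Write S n for the n-th partial sum of alpha. By construction each interval [t_m, t_(m+1))
  carries step size at least T_m, so S t_m \<ge> T_0 + ... + T_(m-1). Comparing both sums with
  integrals of their decreasing summands (mean value theorem on unit intervals) gives an upper
  bound H for S and a lower bound for the sums of T. In each setup the latter eventually
  outgrows H (g m) for a threshold g m at which alpha is already below T_m^2 / C_alpha:
  g m = (m+3)^2 in (a) and (c), g m = (m+3)^(2 \<nu>2 / \<nu>) in (b). Hence every t \<ge> t_m lies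
  beyond g m, which gives the bound with C = 1 / C_alpha.
\<close>

lemma antideriv_diff_bounds:
  fixes f F :: "real \<Rightarrow> real"
  assumes "a < b"
    and deriv: "\<And>x. a \<le> x \<Longrightarrow> x \<le> b \<Longrightarrow> (F has_real_derivative f x) (at x)"
    and anti: "antimono_on {a..b} f"
  shows "(b - a) * f b \<le> F b - F a" and "F b - F a \<le> (b - a) * f a"
proof -
  obtain z where z: "a < z" "z < b" "F b - F a = (b - a) * f z"
    using MVT2[OF \<open>a < b\<close> deriv] by blast
  have "f b \<le> f z" "f z \<le> f a"
    using z by (auto intro!: monotone_onD[OF anti])
  then show "(b - a) * f b \<le> F b - F a" "F b - F a \<le> (b - a) * f a"
    using z \<open>a < b\<close> by (simp_all add: mult_left_mono)
qed

lemma sum_antimono_le_antideriv: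
  fixes f F :: "real \<Rightarrow> real"
  assumes deriv: "\<And>x. a \<le> x \<Longrightarrow> (F has_real_derivative f x) (at x)"
    and anti: "antimono_on {a..} f"
  shows "(\<Sum>k<n. f (real k + a + 1)) \<le> F (real n + a) - F a"
proof -
  have "(\<Sum>k<n. f (real k + a + 1)) \<le> (\<Sum>k<n. F (real (Suc k) + a) - F (real k + a))"
  proof (rule sum_mono)
    fix k
    have "antimono_on {real k + a..real k + a + 1} f"
      by (rule monotone_on_subset[OF anti]) auto
    then show "f (real k + a + 1) \<le> F (real (Suc k) + a) - F (real k + a)"
      using antideriv_diff_bounds(1)[of "real k + a" "real k + a + 1" F f] deriv
      by (simp add: add_ac)
  qed
  also have "\<dots> = F (real n + a) - F a"
    using sum_lessThan_telescope[of "\<lambda>k. F (real k + a)"] by simp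
  finally show ?thesis .
qed

lemma antideriv_le_sum_antimono:
  fixes f F :: "real \<Rightarrow> real"
  assumes deriv: "\<And>x. a \<le> x \<Longrightarrow> (F has_real_derivative f x) (at x)"
    and anti: "antimono_on {a..} f"
  shows "F (real n + a) - F a \<le> (\<Sum>k<n. f (real k + a))"
proof -
  have "F (real n + a) - F a = (\<Sum>k<n. F (real (Suc k) + a) - F (real k + a))"
    using sum_lessThan_telescope[of "\<lambda>k. F (real k + a)"] by simp
  also have "\<dots> \<le> (\<Sum>k<n. f (real k + a))"
  proof (rule sum_mono)
    fix k
    have "antimono_on {real k + a..real k + a + 1} f"
      by (rule monotone_on_subset[OF anti]) auto
    then show "F (real (Suc k) + a) - F (real k + a) \<le> f (real k + a)"
      using antideriv_diff_bounds(2)[of "real k + a" "real k + a + 1" F f] deriv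
      by (simp add: add_ac)
  qed
  finally show ?thesis .
qed

lemma antimono_inverse_powr:
  fixes p :: real
  assumes "0 \<le> p"
  shows "antimono_on {0<..} (\<lambda>x. 1 / x powr p)"
  using assms by (intro monotone_onI) (auto intro!: divide_left_mono powr_mono2 mult_pos_pos)

lemma antimono_ln_powr_div_nonpos:
  fixes q :: real
  assumes "q \<le> 0"
  shows "antimono_on {1<..} (\<lambda>x. ln x powr q / x)"
proof (rule monotone_onI)
  fix x y :: real assume "x \<in> {1<..}" "y \<in> {1<..}" "x \<le> y"
  then have "ln y powr q \<le> ln x powr q"
    using assms by (intro powr_mono2') auto
  with \<open>x \<in> {1<..}\<close> \<open>x \<le> y\<close> show "ln y powr q / y \<le> ln x powr q / x"
    by (intro frac_le) auto
qed

lemma antimono_ln_powr_div: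
  fixes q :: real
  assumes "0 \<le> q" "q \<le> 1"
  shows "antimono_on {exp 1..} (\<lambda>x. ln x powr q / x)"
proof (rule monotone_onI)
  fix x y :: real assume x: "x \<in> {exp 1..}" and y: "y \<in> {exp 1..}" and "x \<le> y"
  have gt1: "1 < z" if "z \<in> {exp 1..}" for z :: real
    using that less_le_trans[of 1 "exp 1" z] by simp
  have split: "ln z powr q / z = (ln z / z) powr q * z powr (q - 1)" if "z \<in> {exp 1..}" for z
    using gt1[OF that] by (simp add: powr_divide powr_diff)
  have "(ln y / y) powr q \<le> (ln x / x) powr q"
    using x y \<open>x \<le> y\<close> assms ln_x_over_x_mono[of x y] gt1[OF y] by (intro powr_mono2) auto
  moreover have "y powr (q - 1) \<le> x powr (q - 1)"
    using gt1[OF x] \<open>x \<le> y\<close> assms by (intro powr_mono2') auto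
  ultimately show "ln y powr q / y \<le> ln x powr q / x"
    unfolding split[OF x] split[OF y] by (intro mult_mono) auto
qed

lemma sum_inverse_bounds:
  "ln (real n + 3) - ln 3 \<le> (\<Sum>k<n. 1 / (real k + 3))"
  "(\<Sum>k<n. 1 / (real k + 3)) \<le> ln (real n + 2) - ln 2"
proof -
  have deriv: "(ln has_real_derivative 1 / x) (at x)" if "2 \<le> x" for x :: real
    using that by (auto intro!: derivative_eq_intros)
  have anti: "antimono_on {2..} (\<lambda>x::real. 1 / x)"
    by (intro monotone_onI) (auto intro: divide_left_mono)
  show "ln (real n + 3) - ln 3 \<le> (\<Sum>k<n. 1 / (real k + 3))"
    using antideriv_le_sum_antimono[where a = 3 and F = ln and f = "\<lambda>x. 1 / x"] deriv
      monotone_on_subset[OF anti, of "{3..}"] by simp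
  show "(\<Sum>k<n. 1 / (real k + 3)) \<le> ln (real n + 2) - ln 2"
    using sum_antimono_le_antideriv[where a = 2 and F = ln and f = "\<lambda>x. 1 / x"] deriv anti
    by (simp add: add.assoc)
qed

lemma sum_inverse_powr_bounds:
  fixes p :: real
  assumes "0 \<le> p" "p \<noteq> 1"
  defines "F \<equiv> \<lambda>x. x powr (1 - p) / (1 - p)"
  shows "F (real n + 3) - F 3 \<le> (\<Sum>k<n. 1 / (real k + 3) powr p)"
    and "(\<Sum>k<n. 1 / (real k + 3) powr p) \<le> F (real n + 2) - F 2"
proof -
  have deriv: "(F has_real_derivative 1 / x powr p) (at x)" if "2 \<le> x" for x :: real
  proof -
    have "(F has_real_derivative (1 - p) * x powr (1 - p - 1) / (1 - p)) (at x)"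
      unfolding F_def using that by (auto intro!: derivative_eq_intros)
    then show ?thesis
      using that assms(2) by (simp add: powr_minus_divide)
  qed
  have anti: "antimono_on {2..} (\<lambda>x. 1 / x powr p)"
    by (rule monotone_on_subset[OF antimono_inverse_powr[OF assms(1)]]) auto
  show "F (real n + 3) - F 3 \<le> (\<Sum>k<n. 1 / (real k + 3) powr p)"
    using antideriv_le_sum_antimono[where a = 3 and F = F and f = "\<lambda>x. 1 / x powr p"] deriv
      monotone_on_subset[OF anti, of "{3..}"] by simp
  show "(\<Sum>k<n. 1 / (real k + 3) powr p) \<le> F (real n + 2) - F 2"
    using sum_antimono_le_antideriv[where a = 2 and F = F and f = "\<lambda>x. 1 / x powr p"] deriv anti
    by (simp add: add.assoc)
qed

lemma has_real_derivative_ln_powr: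
  fixes q x :: real
  assumes "1 < x" "q \<noteq> -1"
  shows "((\<lambda>x. ln x powr (q + 1) / (q + 1)) has_real_derivative ln x powr q / x) (at x)"
proof -
  have "((\<lambda>x. ln x powr (q + 1) / (q + 1)) has_real_derivative
      (q + 1) * ln x powr (q + 1 - 1) * (1 / x) / (q + 1)) (at x)"
    using assms(1) by (auto intro!: derivative_eq_intros)
  moreover have "q + 1 \<noteq> 0" using assms(2) by linarith
  ultimately show ?thesis by simp
qed

lemma sum_ln_powr_div_lower:
  fixes q :: real
  assumes "0 \<le> q" "q \<le> 1"
  defines "F \<equiv> \<lambda>x. ln x powr (q + 1) / (q + 1)"
  shows "F (real n + 3) - F 3 \<le> (\<Sum>k<n. ln (real k + 3) powr q / (real k + 3))"
proof -
  have "antimono_on {3..} (\<lambda>x. ln x powr q / x)"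
    by (rule monotone_on_subset[OF antimono_ln_powr_div[OF assms(1,2)]]) (use exp_le in auto)
  then show ?thesis
    unfolding F_def using assms
    by (intro antideriv_le_sum_antimono[where a = 3, simplified] has_real_derivative_ln_powr) auto
qed

lemma sum_ln_powr_div_bounds:
  fixes q :: real
  assumes "q \<le> 0" "q \<noteq> -1"
  defines "F \<equiv> \<lambda>x. ln x powr (q + 1) / (q + 1)"
  shows "F (real n + 3) - F 3 \<le> (\<Sum>k<n. ln (real k + 3) powr q / (real k + 3))"
    and "(\<Sum>k<n. ln (real k + 3) powr q / (real k + 3)) \<le> F (real n + 2) - F 2"
proof -
  have deriv: "(F has_real_derivative ln x powr q / x) (at x)" if "2 \<le> x" for x :: real
    unfolding F_def using that assms(2) by (intro has_real_derivative_ln_powr) auto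
  have anti: "antimono_on {2..} (\<lambda>x. ln x powr q / x)"
    by (rule monotone_on_subset[OF antimono_ln_powr_div_nonpos[OF assms(1)]]) auto
  show "F (real n + 3) - F 3 \<le> (\<Sum>k<n. ln (real k + 3) powr q / (real k + 3))"
    using antideriv_le_sum_antimono[where a = 3 and F = F and f = "\<lambda>x. ln x powr q / x"] deriv
      monotone_on_subset[OF anti, of "{3..}"] by simp
  show "(\<Sum>k<n. ln (real k + 3) powr q / (real k + 3)) \<le> F (real n + 2) - F 2"
    using sum_antimono_le_antideriv[where a = 2 and F = F and f = "\<lambda>x. ln x powr q / x"] deriv anti
    by (simp add: add.assoc)
qed

lemma tseq_Suc_ge:
  fixes alpha T :: "nat \<Rightarrow> real"
  assumes T_pos: "0 < T m"
    and diverges: "filterlim (\<lambda>n. \<Sum>t<n. alpha t) at_top sequentially"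
  shows "(\<Sum>t<tseq alpha T m. alpha t) + T m \<le> (\<Sum>t<tseq alpha T (Suc m). alpha t)"
proof -
  define a where "a = tseq alpha T m"
  define P where "P k \<longleftrightarrow> T m \<le> (\<Sum>t = a..<k. alpha t)" for k
  have split: "(\<Sum>t<k. alpha t) = (\<Sum>t<a. alpha t) + (\<Sum>t = a..<k. alpha t)" if "a \<le> k" for k
    using that by (simp add: lessThan_atLeast0 sum.atLeastLessThan_concat)
  obtain N where N: "\<And>n. N \<le> n \<Longrightarrow> (\<Sum>t<a. alpha t) + T m \<le> (\<Sum>t<n. alpha t)"
    using diverges unfolding filterlim_at_top eventually_sequentially by blast
  have "P (max N a)"
    using N[of "max N a"] split[of "max N a"] unfolding P_def by simp
  then have least: "P (LEAST k. P k)" by (rule LeastI)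
  have a_le: "a \<le> (LEAST k. P k)"
  proof (rule ccontr)
    assume "\<not> a \<le> (LEAST k. P k)"
    then have "(\<Sum>t = a..<(LEAST k. P k). alpha t) = 0" by simp
    with least T_pos show False unfolding P_def by linarith
  qed
  have Suc_eq: "tseq alpha T (Suc m) = (LEAST k. P k)" by (simp add: P_def a_def)
  show ?thesis
    using split[OF a_le] least unfolding Suc_eq P_def a_def[symmetric] by linarith
qed

lemma sum_le_tseq:
  fixes alpha T :: "nat \<Rightarrow> real"
  assumes "\<And>m. 0 < T m" and "filterlim (\<lambda>n. \<Sum>t<n. alpha t) at_top sequentially"
  shows "(\<Sum>k<m. T k) \<le> (\<Sum>t<tseq alpha T m. alpha t)"
proof (induction m)
  case (Suc m)
  then show ?case using tseq_Suc_ge[of T m alpha] assms by simp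
qed simp

lemma eventually_tseq_gt:
  fixes alpha T :: "nat \<Rightarrow> real" and H :: "real \<Rightarrow> real" and g :: "nat \<Rightarrow> real"
  assumes "\<And>m. 0 < T m" and "filterlim (\<lambda>n. \<Sum>t<n. alpha t) at_top sequentially"
    and partial_sums_le: "\<And>n. (\<Sum>t<n. alpha t) \<le> H (real n)" and H_mono: "mono_on {0..} H"
    and outgrow: "eventually (\<lambda>m. H (g m) < (\<Sum>k<m. T k)) sequentially"
  shows "eventually (\<lambda>m. \<forall>t \<ge> tseq alpha T m. g m < real t) sequentially"
  using outgrow
proof eventually_elim
  case (elim m)
  show ?case
  proof (intro allI impI)
    fix t assume "tseq alpha T m \<le> t"
    have "H (g m) < H (real (tseq alpha T m))"
      using elim sum_le_tseq[of T alpha m, OF assms(1,2)] partial_sums_le[of "tseq alpha T m"]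
      by linarith
    then have "g m < real (tseq alpha T m)"
      using monotone_onD[OF H_mono, of "real (tseq alpha T m)" "g m"] by fastforce
    with \<open>tseq alpha T m \<le> t\<close> show "g m < real t" by linarith
  qed
qed

lemma alpha_le_T_squared_harmonic:
  fixes C \<nu> :: real and alpha T :: "nat \<Rightarrow> real"
  assumes C: "0 < C" and \<nu>: "0 < \<nu>" "\<nu> \<le> 1"
    and alpha_eq: "\<And>t. alpha t = C / (real t + 3)"
    and T_eq: "\<And>m. T m = C * ln (real m + 3) powr \<nu> / (real m + 3)"
  shows "eventually (\<lambda>m. \<forall>t \<ge> tseq alpha T m. alpha t \<le> 1 / C * (T m)\<^sup>2) sequentially"
proof -
  define F where "F x = ln x powr (\<nu> + 1) / (\<nu> + 1)" for x :: real
  have S_eq: "(\<Sum>t<n. alpha t) = C * (\<Sum>k<n. 1 / (real k + 3))" for n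
    by (simp add: alpha_eq sum_distrib_left)
  have T_sum: "C * (F (real m + 3) - F 3) \<le> (\<Sum>k<m. T k)" for m
  proof -
    have "(\<Sum>k<m. T k) = C * (\<Sum>k<m. ln (real k + 3) powr \<nu> / (real k + 3))"
      by (simp add: T_eq sum_distrib_left)
    then show ?thesis
      using sum_ln_powr_div_lower[of \<nu> m] \<nu> C by (simp add: F_def mult_left_mono)
  qed
  have "filterlim (\<lambda>n. C * (ln (real n + 3) - ln 3)) at_top sequentially"
    using C by real_asymp
  then have diverges: "filterlim (\<lambda>n. \<Sum>t<n. alpha t) at_top sequentially"
    by (rule filterlim_at_top_mono) (use C sum_inverse_bounds(1) in \<open>simp add: S_eq\<close>)
  have "eventually (\<lambda>m. \<forall>t \<ge> tseq alpha T m. (real m + 3)\<^sup>2 - 2 < real t) sequentially"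
  proof (rule eventually_tseq_gt[where H = "\<lambda>x. C * ln (x + 2)"])
    show "(\<Sum>t<n. alpha t) \<le> C * ln (real n + 2)" for n
    proof -
      have "0 \<le> ln (2::real)" by simp
      then have "(\<Sum>k<n. 1 / (real k + 3)) \<le> ln (real n + 2)"
        using sum_inverse_bounds(2)[of n] by linarith
      then show ?thesis using C by (simp add: S_eq)
    qed
    show "mono_on {0..} (\<lambda>x. C * ln (x + 2))"
      using C by (intro monotone_onI) auto
    have "eventually (\<lambda>m. 2 * ln (real m + 3) < F (real m + 3) - F 3) sequentially"
      unfolding F_def using \<nu> by real_asymp
    then show "eventually (\<lambda>m. C * ln ((real m + 3)\<^sup>2 - 2 + 2) < (\<Sum>k<m. T k)) sequentially"
    proof eventually_elim
      case (elim m)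
      then have "C * (2 * ln (real m + 3)) < C * (F (real m + 3) - F 3)"
        using C by simp
      then show ?case
        using T_sum[of m] by (simp add: ln_realpow)
    qed
  qed (use C diverges in \<open>auto simp: T_eq\<close>)
  then show ?thesis
  proof eventually_elim
    case (elim m)
    show ?case
    proof (intro allI impI)
      fix t assume "tseq alpha T m \<le> t"
      then have t_large: "(real m + 3)\<^sup>2 \<le> real t + 3" using elim by fastforce
      have "1 \<le> ln (real m + 3) powr \<nu>"
        using exp_le \<nu> by (intro ge_one_powr_ge_zero) (auto simp: ln_ge_iff)
      then have "1 \<le> (ln (real m + 3) powr \<nu>)\<^sup>2" by (simp add: one_le_power)
      have "alpha t \<le> C / (real m + 3)\<^sup>2"
        using t_large C by (simp add: alpha_eq divide_left_mono)
      also have "\<dots> \<le> C * (ln (real m + 3) powr \<nu>)\<^sup>2 / (real m + 3)\<^sup>2"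
        using \<open>1 \<le> (ln (real m + 3) powr \<nu>)\<^sup>2\<close> C by (intro divide_right_mono) auto
      also have "\<dots> = 1 / C * (T m)\<^sup>2"
        using C by (simp add: T_eq power2_eq_square field_simps)
      finally show "alpha t \<le> 1 / C * (T m)\<^sup>2" .
    qed
  qed
qed

lemma alpha_le_T_squared_harmonic_ln:
  fixes C \<nu> :: real and alpha T :: "nat \<Rightarrow> real"
  assumes C: "0 < C" and \<nu>: "0 < \<nu>" "\<nu> < 1"
    and alpha_eq: "\<And>t. alpha t = C / ((real t + 3) * ln (real t + 3) powr \<nu>)"
    and T_eq: "\<And>m. T m = C / (real m + 3)"
  shows "eventually (\<lambda>m. \<forall>t \<ge> tseq alpha T m. alpha t \<le> 1 / C * (T m)\<^sup>2) sequentially"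
proof -
  define G where "G x = ln x powr (1 - \<nu>) / (1 - \<nu>)" for x :: real
  have S_eq: "(\<Sum>t<n. alpha t) = C * (\<Sum>k<n. ln (real k + 3) powr (- \<nu>) / (real k + 3))" for n
    by (simp add: alpha_eq sum_distrib_left powr_minus_divide mult.commute)
  have S_bounds: "C * (G (real n + 3) - G 3) \<le> (\<Sum>t<n. alpha t)"
      "(\<Sum>t<n. alpha t) \<le> C * (G (real n + 2) - G 2)" for n
    using sum_ln_powr_div_bounds[of "- \<nu>" n] \<nu> C
    by (simp_all add: S_eq G_def mult_left_mono)
  have "filterlim (\<lambda>n. C * (G (real n + 3) - G 3)) at_top sequentially"
    unfolding G_def using C \<nu> by real_asymp
  then have diverges: "filterlim (\<lambda>n. \<Sum>t<n. alpha t) at_top sequentially"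
    by (rule filterlim_at_top_mono) (use S_bounds(1) in simp)
  have "eventually (\<lambda>m. \<forall>t \<ge> tseq alpha T m. (real m + 3)\<^sup>2 - 2 < real t) sequentially"
  proof (rule eventually_tseq_gt[where H = "\<lambda>x. C * G (x + 2)"])
    show "(\<Sum>t<n. alpha t) \<le> C * G (real n + 2)" for n
    proof -
      have "0 \<le> C * G 2" using C \<nu> by (simp add: G_def)
      then show ?thesis using S_bounds(2)[of n] by (simp add: right_diff_distrib)
    qed
    show "mono_on {0..} (\<lambda>x. C * G (x + 2))"
      using C \<nu> by (intro monotone_onI) (auto simp: G_def intro!: divide_right_mono powr_mono2)
    have "eventually (\<lambda>m. G ((real m + 3)\<^sup>2) < ln (real m + 3) - ln 3) sequentially"
      unfolding G_def using \<nu> by real_asymp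
    then show "eventually (\<lambda>m. C * G ((real m + 3)\<^sup>2 - 2 + 2) < (\<Sum>k<m. T k)) sequentially"
    proof eventually_elim
      case (elim m)
      have "(\<Sum>k<m. T k) = C * (\<Sum>k<m. 1 / (real k + 3))"
        by (simp add: T_eq sum_distrib_left)
      then have "C * (ln (real m + 3) - ln 3) \<le> (\<Sum>k<m. T k)"
        using sum_inverse_bounds(1)[of m] C by (simp add: mult_left_mono)
      moreover have "C * G ((real m + 3)\<^sup>2) < C * (ln (real m + 3) - ln 3)"
        using elim C by simp
      ultimately show ?case by simp
    qed
  qed (use C diverges in \<open>auto simp: T_eq\<close>)
  then show ?thesis
  proof eventually_elim
    case (elim m)
    show ?case
    proof (intro allI impI)
      fix t assume "tseq alpha T m \<le> t"
      then have t_large: "(real m + 3)\<^sup>2 \<le> real t + 3" using elim by fastforce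
      have "1 \<le> ln (real t + 3) powr \<nu>"
        using exp_le \<nu> by (intro ge_one_powr_ge_zero) (auto simp: ln_ge_iff)
      then have "alpha t \<le> C / (real t + 3)"
        using C by (simp add: alpha_eq divide_left_mono)
      also have "\<dots> \<le> C / (real m + 3)\<^sup>2"
        using t_large C by (simp add: divide_left_mono)
      also have "\<dots> = 1 / C * (T m)\<^sup>2"
        using C by (simp add: T_eq power2_eq_square field_simps)
      finally show "alpha t \<le> 1 / C * (T m)\<^sup>2" .
    qed
  qed
qed

lemma alpha_le_T_squared_powr:
  fixes C \<nu> \<nu>2 :: real and alpha T :: "nat \<Rightarrow> real"
  assumes C: "0 < C" and \<nu>: "0 < \<nu>" "\<nu> < 1" and \<nu>2: "0 < \<nu>2" "\<nu>2 < \<nu> / (2 - \<nu>)"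
    and alpha_eq: "\<And>t. alpha t = C / (real t + 3) powr \<nu>"
    and T_eq: "\<And>m. T m = C / (real m + 3) powr \<nu>2"
  shows "eventually (\<lambda>m. \<forall>t \<ge> tseq alpha T m. alpha t \<le> 1 / C * (T m)\<^sup>2) sequentially"
proof -
  define F where "F p x = x powr (1 - p) / (1 - p)" for p x :: real
  have "\<nu> / (2 - \<nu>) < 1" using \<nu> by (simp add: divide_less_eq)
  with \<nu>2 have "\<nu>2 < 1" by linarith
  have S_eq: "(\<Sum>t<n. alpha t) = C * (\<Sum>k<n. 1 / (real k + 3) powr \<nu>)" for n
    by (simp add: alpha_eq sum_distrib_left)
  have S_bounds: "C * (F \<nu> (real n + 3) - F \<nu> 3) \<le> (\<Sum>t<n. alpha t)"
      "(\<Sum>t<n. alpha t) \<le> C * (F \<nu> (real n + 2) - F \<nu> 2)" for n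
    using sum_inverse_powr_bounds[of \<nu> n] \<nu> C
    by (simp_all add: S_eq F_def mult_left_mono)
  have T_sum: "C * (F \<nu>2 (real m + 3) - F \<nu>2 3) \<le> (\<Sum>k<m. T k)" for m
  proof -
    have "(\<Sum>k<m. T k) = C * (\<Sum>k<m. 1 / (real k + 3) powr \<nu>2)"
      by (simp add: T_eq sum_distrib_left)
    then show ?thesis
      using sum_inverse_powr_bounds(1)[of \<nu>2 m] \<nu>2 \<open>\<nu>2 < 1\<close> C
      by (simp add: F_def mult_left_mono)
  qed
  have "filterlim (\<lambda>n. C * (F \<nu> (real n + 3) - F \<nu> 3)) at_top sequentially"
    unfolding F_def using C \<nu> by real_asymp
  then have diverges: "filterlim (\<lambda>n. \<Sum>t<n. alpha t) at_top sequentially"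
    by (rule filterlim_at_top_mono) (use S_bounds(1) in simp)
  define r where "r = 2 * \<nu>2 / \<nu>"
  have "eventually (\<lambda>m. \<forall>t \<ge> tseq alpha T m. (real m + 3) powr r - 2 < real t) sequentially"
  proof (rule eventually_tseq_gt[where H = "\<lambda>x. C * F \<nu> (x + 2)"])
    show "(\<Sum>t<n. alpha t) \<le> C * F \<nu> (real n + 2)" for n
    proof -
      have "0 \<le> C * F \<nu> 2" using C \<nu> by (simp add: F_def)
      then show ?thesis using S_bounds(2)[of n] by (simp add: right_diff_distrib)
    qed
    show "mono_on {0..} (\<lambda>x. C * F \<nu> (x + 2))"
      using C \<nu> by (intro monotone_onI) (auto simp: F_def intro!: divide_right_mono powr_mono2)
    \<comment> \<open>equivalent to \<nu>2 < \<nu> / (2 - \<nu>); it is the only use of that hypothesis\<close>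
    have "r * (1 - \<nu>) < 1 - \<nu>2"
      using \<nu> \<nu>2 by (simp add: r_def field_simps)
    then have "eventually (\<lambda>m. F \<nu> ((real m + 3) powr r) < F \<nu>2 (real m + 3) - F \<nu>2 3) sequentially"
      unfolding F_def using \<nu> \<nu>2 \<open>\<nu>2 < 1\<close> by (simp add: powr_powr) real_asymp
    then show "eventually (\<lambda>m. C * F \<nu> ((real m + 3) powr r - 2 + 2) < (\<Sum>k<m. T k)) sequentially"
    proof eventually_elim
      case (elim m)
      then have "C * F \<nu> ((real m + 3) powr r) < C * (F \<nu>2 (real m + 3) - F \<nu>2 3)"
        using C by simp
      with T_sum[of m] show ?case by simp
    qed
  qed (use C diverges in \<open>auto simp: T_eq\<close>)
  then show ?thesis
  proof eventually_elim
    case (elim m)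
    show ?case
    proof (intro allI impI)
      fix t assume "tseq alpha T m \<le> t"
      then have "(real m + 3) powr r \<le> real t + 3" using elim by fastforce
      then have "((real m + 3) powr r) powr \<nu> \<le> (real t + 3) powr \<nu>"
        using \<nu> by (intro powr_mono2) auto
      moreover have "((real m + 3) powr r) powr \<nu> = ((real m + 3) powr \<nu>2)\<^sup>2"
        using \<nu> by (simp add: r_def powr_powr power2_eq_square flip: powr_add)
      ultimately have "alpha t \<le> C / ((real m + 3) powr \<nu>2)\<^sup>2"
        using C by (simp add: alpha_eq divide_left_mono)
      also have "\<dots> = 1 / C * (T m)\<^sup>2"
        using C by (simp add: T_eq power2_eq_square field_simps)
      finally show "alpha t \<le> 1 / C * (T m)\<^sup>2" .
    qed
  qed
qed

theorem lemma1:
  fixes C\<^sub>\<alpha> :: real and alpha T :: "nat \<Rightarrow> real"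
  assumes "C\<^sub>\<alpha> > 0"
    and "(\<exists>\<nu>1. 0 < \<nu>1 \<and> \<nu>1 < 1 \<and>
            (\<forall>t. alpha t = C\<^sub>\<alpha> / (real t + 3)) \<and>
            (\<forall>m. T m = C\<^sub>\<alpha> * (ln (real m + 3)) powr \<nu>1 / (real m + 3)))
       \<or> (\<exists>\<nu> \<nu>2. 2/3 < \<nu> \<and> \<nu> < 1 \<and> 1/2 < \<nu>2 \<and> \<nu>2 < \<nu> / (2 - \<nu>) \<and>
            (\<forall>t. alpha t = C\<^sub>\<alpha> / (real t + 3) powr \<nu>) \<and>
            (\<forall>m. T m = C\<^sub>\<alpha> / (real m + 3) powr \<nu>2))
       \<or> (\<exists>\<nu>. 0 < \<nu> \<and> \<nu> < 1 \<and>
            (\<forall>t. alpha t = C\<^sub>\<alpha> / ((real t + 3) * (ln (real t + 3)) powr \<nu>)) \<and>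
            (\<forall>m. T m = C\<^sub>\<alpha> / (real m + 3)))"
  shows "\<exists>C::real. \<exists>m0::nat. \<forall>m \<ge> m0. \<forall>t \<ge> tseq alpha T m. alpha t \<le> C * (T m)\<^sup>2"
proof -
  have "eventually (\<lambda>m. \<forall>t \<ge> tseq alpha T m. alpha t \<le> 1 / C\<^sub>\<alpha> * (T m)\<^sup>2) sequentially"
    using assms(2)
  proof (elim disjE exE conjE)
    fix \<nu>1 assume "0 < \<nu>1" "\<nu>1 < 1" "\<forall>t. alpha t = C\<^sub>\<alpha> / (real t + 3)"
      "\<forall>m. T m = C\<^sub>\<alpha> * ln (real m + 3) powr \<nu>1 / (real m + 3)"
    then show ?thesis
      using alpha_le_T_squared_harmonic[OF assms(1), of \<nu>1 alpha T] by auto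
  next
    fix \<nu> \<nu>2 assume "2/3 < \<nu>" "\<nu> < 1" "1/2 < \<nu>2" "\<nu>2 < \<nu> / (2 - \<nu>)"
      "\<forall>t. alpha t = C\<^sub>\<alpha> / (real t + 3) powr \<nu>" "\<forall>m. T m = C\<^sub>\<alpha> / (real m + 3) powr \<nu>2"
    then show ?thesis
      using alpha_le_T_squared_powr[OF assms(1), of \<nu> \<nu>2 alpha T] by auto
  next
    fix \<nu> assume "0 < \<nu>" "\<nu> < 1"
      "\<forall>t. alpha t = C\<^sub>\<alpha> / ((real t + 3) * ln (real t + 3) powr \<nu>)"
      "\<forall>m. T m = C\<^sub>\<alpha> / (real m + 3)"
    then show ?thesis
      using alpha_le_T_squared_harmonic_ln[OF assms(1), of \<nu> alpha T] by auto
  qed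
  then show ?thesis unfolding eventually_sequentially by blast
qed

end
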